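(* Under the setup of the context (where forward invariance of $\mathcal X\times\mathcal Z$ is NOT assumed), let Assumptions (A1)–(A3) hold, let $\xi\ge\mathsf{osLip}_x(f)$ and let $\zeta>0$ satisfy $\mathsf{osLip}(x\mapsto f(x,z^*(x)))\le-\zeta$. Fix $n\in\mathbb Z_{>0}$ and $T$ with $0<T<T(n)$, where $T(n)$ is as defined in the context. Suppose there exist subsets $\mathcal X_0\subseteq\mathcal X$ and $\mathcal Z_0\subseteq\mathcal Z$ such that every solution of the interconnected system with initial condition in $\mathcal X_0\times\mathcal Z_0$ remains in $\mathcal X\times\mathcal Z$ for all $t\ge0$. Then there exist $\eta\in\mathbb R^2_{>0}$, $\varrho>0$ and $\alpha>0$ (depending only on $n$, $T$ and the constants above) such that for every solution with $x(0)\in\mathcal X_0$, $z(0)\in\mathcal Z_0$, $$\big\|(\|x(t)\|_{\mathcal X},\|z(t)\|_{\mathcal Z})\big\|_{2,[\eta]}\le\varrho e^{-\alpha t}\big\|(\|x(0)\|_{\mathcal X},\|z(0)\|_{\mathcal Z})\big\|_{2,[\eta]}\quad\forall t\ge0,$$ with $\|(v_1,v_2)\|_{2,[\eta]}:=\sqrt{\eta_1v_1^2+\eta_2v_2^2}$.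
   Context: Setup. $\|\cdot\|_{\mathcal X}$ norm on $\mathbb R^{n_x}$, $\|\cdot\|_{\mathcal Z}$ norm on $\mathbb R^{n_z}$, $\mathcal X,\mathcal Z$ convex. $f:\mathcal X\times\mathcal Z\to\mathbb R^{n_x}$, $\mathsf G:\mathcal X\times\mathcal Z\to\mathcal Z$ continuous, $\mathsf G^1=\mathsf G$, $\mathsf G^{m+1}(x,z)=\mathsf G(x,\mathsf G^m(x,z))$. Interconnected system: $\dot x(t)=f(x(t),z(t))$, $z_k=\mathsf G^n(x(kT),z_{k-1})$, $z(t)=z_k$ for $t\in[kT,(k+1)T)$; $f(0,0)=0$, $\mathsf G(0,0)=0$. $z^*(x)$ is the unique fixed point of $z\mapsto\mathsf G(x,z)$. $\mathsf{Lip}_z(f):=\sup_x\sup_{z_1\ne z_2}\|f(x,z_1)-f(x,z_2)\|_{\mathcal X}/\|z_1-z_2\|_{\mathcal Z}$; $\mathsf{Lip}_x(f),\mathsf{Lip}_x(\mathsf G),\mathsf{Lip}_z(\mathsf G)$ analogously. With a weak pairing $\llbracket\cdot;\cdot\rrbracket$ compatible with $\|\cdot\|_{\mathcal X}$: $\mathsf{osLip}_x(f):=\sup_z\sup_{x_1\ne x_2}\llbracket f(x_1,z)-f(x_2,z);x_1-x_2\rrbracket/\|x_1-x_2\|^2_{\mathcal X}$, $\mathsf{osLip}(F)$ analogous for $F:\mathcal X\to\mathbb R^{n_x}$. Assumptions: (A1) $\mathsf{Lip}_x(f)<\infty$; (A2) $\mathsf{Lip}_z(f),\mathsf{Lip}_x(\mathsf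 G)\in(0,\infty)$; (A3) $\mathsf{Lip}_z(\mathsf G)<1$. $T(n)$: with $C_1:=\frac{\mathsf{Lip}_z(f)\mathsf{Lip}_x(\mathsf G)}{1-\mathsf{Lip}_z(\mathsf G)}\big(\mathsf{Lip}_x(f)+\frac{\mathsf{Lip}_z(f)\mathsf{Lip}_x(\mathsf G)}{1-\mathsf{Lip}_z(\mathsf G)}\big)$ and $C_2(n):=[\mathsf{Lip}_z(\mathsf G)]^n\frac{\mathsf{Lip}_x(\mathsf G)\mathsf{Lip}_z(f)}{1-\mathsf{Lip}_z(\mathsf G)}$, $T(n):=\frac1\xi\log\big(\frac{\xi(1-[\mathsf{Lip}_z(\mathsf G)]^n)}{C_2(n)+C_1/\zeta}+1\big)$ if $\xi\ne0$ (interpreted as $+\infty$ if the log argument is $\le0$) and $T(n):=\frac{1-[\mathsf{Lip}_z(\mathsf G)]^n}{C_2(n)+C_1/\zeta}$ if $\xi=0$. *)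

theory Defs
  imports "HOL-Analysis.Analysis"
begin

definition is_norm :: "('a::real_vector \<Rightarrow> real) \<Rightarrow> bool" where
  "is_norm N \<longleftrightarrow> (\<forall>x. 0 \<le> N x) \<and> (\<forall>x. N x = 0 \<longleftrightarrow> x = 0)
     \<and> (\<forall>c x. N (c *\<^sub>R x) = \<bar>c\<bar> * N x) \<and> (\<forall>x y. N (x + y) \<le> N x + N y)"

text \<open>Weak pairing (Davydov--Jafarpour--Bullo) compatible with the norm N and satisfying
  Deimling's inequality.\<close>
definition compatible_weak_pairing ::
  "('a::real_normed_vector \<Rightarrow> real) \<Rightarrow> ('a \<Rightarrow> 'a \<Rightarrow> real) \<Rightarrow> bool" where
  "compatible_weak_pairing N WP \<longleftrightarrow>
     (\<forall>x1 x2 y. WP (x1 + x2) y \<le> WP x1 y + WP x2 y)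
   \<and> (\<forall>y. continuous_on UNIV (\<lambda>x. WP x y))
   \<and> (\<forall>x y a. 0 \<le> a \<longrightarrow> WP (a *\<^sub>R x) y = a * WP x y \<and> WP x (a *\<^sub>R y) = a * WP x y)
   \<and> (\<forall>x y. WP (- x) (- y) = WP x y)
   \<and> (\<forall>x y. \<bar>WP x y\<bar> \<le> sqrt (WP x x) * sqrt (WP y y))
   \<and> (\<forall>x. x \<noteq> 0 \<longrightarrow> WP x x > 0)
   \<and> (\<forall>x. WP x x = (N x)\<^sup>2)
   \<and> (\<forall>x y. WP x y \<le> N y * Lim (at_right 0) (\<lambda>h::real. (N (y + h *\<^sub>R x) - N y) / h))"

text \<open>Lipschitz constants (as extended reals; the sup of the empty set is -\<infinity>,
  whose real value is 0).\<close>
definition Lip_z :: "('z::ab_group_add \<Rightarrow> real) \<Rightarrow> ('y::ab_group_add \<Rightarrow> real) \<Rightarrow> 'x set \<Rightarrow> 'z set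
    \<Rightarrow> ('x \<Rightarrow> 'z \<Rightarrow> 'y) \<Rightarrow> ereal" where
  "Lip_z Nz Ny X Z f =
     Sup {ereal (Ny (f x z1 - f x z2) / Nz (z1 - z2)) | x z1 z2. x \<in> X \<and> z1 \<in> Z \<and> z2 \<in> Z \<and> z1 \<noteq> z2}"

definition Lip_x :: "('x::ab_group_add \<Rightarrow> real) \<Rightarrow> ('y::ab_group_add \<Rightarrow> real) \<Rightarrow> 'x set \<Rightarrow> 'z set
    \<Rightarrow> ('x \<Rightarrow> 'z \<Rightarrow> 'y) \<Rightarrow> ereal" where
  "Lip_x Nx Ny X Z f =
     Sup {ereal (Ny (f x1 z - f x2 z) / Nx (x1 - x2)) | x1 x2 z. x1 \<in> X \<and> x2 \<in> X \<and> x1 \<noteq> x2 \<and> z \<in> Z}"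

definition osLip_x :: "('x::ab_group_add \<Rightarrow> 'x \<Rightarrow> real) \<Rightarrow> ('x \<Rightarrow> real) \<Rightarrow> 'x set \<Rightarrow> 'z set
    \<Rightarrow> ('x \<Rightarrow> 'z \<Rightarrow> 'x) \<Rightarrow> ereal" where
  "osLip_x WP Nx X Z f =
     Sup {ereal (WP (f x1 z - f x2 z) (x1 - x2) / (Nx (x1 - x2))\<^sup>2) | x1 x2 z.
            x1 \<in> X \<and> x2 \<in> X \<and> x1 \<noteq> x2 \<and> z \<in> Z}"

definition osLip :: "('x::ab_group_add \<Rightarrow> 'x \<Rightarrow> real) \<Rightarrow> ('x \<Rightarrow> real) \<Rightarrow> 'x set
    \<Rightarrow> ('x \<Rightarrow> 'x) \<Rightarrow> ereal" where
  "osLip WP Nx X F =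
     Sup {ereal (WP (F x1 - F x2) (x1 - x2) / (Nx (x1 - x2))\<^sup>2) | x1 x2. x1 \<in> X \<and> x2 \<in> X \<and> x1 \<noteq> x2}"

definition zstar :: "('x \<Rightarrow> 'z \<Rightarrow> 'z) \<Rightarrow> 'z set \<Rightarrow> 'x \<Rightarrow> 'z" where
  "zstar G Z x = (THE z. z \<in> Z \<and> G x z = z)"

text \<open>The bound T(n) (as an extended real, +\<infinity> when the log argument is \<le> 0).
  Arguments: \<xi>, \<zeta>, Lip_x(f), Lip_z(f), Lip_x(G), Lip_z(G), n.\<close>
definition Tbound :: "real \<Rightarrow> real \<Rightarrow> real \<Rightarrow> real \<Rightarrow> real \<Rightarrow> real \<Rightarrow> nat \<Rightarrow> ereal" where
  "Tbound \<xi> \<zeta> Lxf Lzf LxG LzG n =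
    (let C1 = Lzf * LxG / (1 - LzG) * (Lxf + Lzf * LxG / (1 - LzG));
         C2 = LzG ^ n * LxG * Lzf / (1 - LzG);
         D = C2 + C1 / \<zeta>
     in if \<xi> = 0 then ereal ((1 - LzG ^ n) / D)
        else (let a = \<xi> * (1 - LzG ^ n) / D + 1
              in if a \<le> 0 then \<infinity> else ereal (ln a / \<xi>)))"

definition is_solution :: "('x::real_normed_vector \<Rightarrow> 'z \<Rightarrow> 'x) \<Rightarrow> ('x \<Rightarrow> 'z \<Rightarrow> 'z) \<Rightarrow> nat
    \<Rightarrow> real \<Rightarrow> (real \<Rightarrow> 'x) \<Rightarrow> (real \<Rightarrow> 'z) \<Rightarrow> bool" where
  "is_solution f G n T x z \<longleftrightarrow>
     continuous_on {0..} x
   \<and> (\<forall>t\<ge>0. (x has_vector_derivative f (x t) (z t)) (at t within {t..}))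
   \<and> (\<exists>zs. (\<forall>t\<ge>0. z t = zs (nat \<lfloor>t / T\<rfloor>))
          \<and> (\<forall>k. zs (Suc k) = (G (x (real (Suc k) * T)) ^^ n) (zs k)))"

end

theory Submission
  imports Defs
begin

text \<open>On each sampling interval \<open>[k T, (k + 1) T)\<close> the estimate \<open>z\<close> is frozen at \<open>z\<^sub>k\<close>.
  A comparison principle for right Dini derivatives of norms, made available through the weak
  pairing, bounds the drift of \<open>x\<close> over the interval by the one-sided Lipschitz constant \<open>\<xi>\<close>,
  and shows that \<open>Nx x\<close> contracts at rate \<open>\<zeta>\<close> up to the perturbation caused by the estimation
  error. Together with the contraction of \<open>G\<^sup>n\<close> this gives, for \<open>X\<^sub>k = Nx (x (k T))\<close> and
  \<open>e\<^sub>k = Nz (z\<^sub>k - z\<^sup>*(x (k T)))\<close>, a linear recursion \<open>(X\<^sub>k\<^sub>+\<^sub>1, e\<^sub>k\<^sub>+\<^sub>1) \<le> A (X\<^sub>k, e\<^sub>k)\<close> with a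
  nonnegative \<open>2 \<times> 2\<close> matrix \<open>A\<close>. The condition \<open>T < T(n)\<close> is exactly \<open>det (I - A) > 0\<close>, so \<open>A\<close>
  contracts a weighted \<open>l\<^sub>1\<close> norm. Geometric decay at the sampling instants then gives exponential
  decay of \<open>Nx (x t) + Nz (z t)\<close> for all \<open>t\<close>, and the weighted Euclidean bound follows with
  \<open>\<eta> = (1, 1)\<close> by equivalence of norms on \<open>\<real>\<^sup>2\<close>.\<close>

lemma is_norm_nonneg: "is_norm N \<Longrightarrow> 0 \<le> N x"
  by (simp add: is_norm_def)

lemma is_norm_zero: "is_norm N \<Longrightarrow> N 0 = 0"
  by (simp add: is_norm_def)

lemma is_norm_pos: "is_norm N \<Longrightarrow> x \<noteq> 0 \<Longrightarrow> 0 < N x"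
  unfolding is_norm_def by (metis order_le_less)

lemma is_norm_scaleR: "is_norm N \<Longrightarrow> N (c *\<^sub>R x) = \<bar>c\<bar> * N x"
  by (simp add: is_norm_def)

lemma is_norm_triangle: "is_norm N \<Longrightarrow> N (x + y) \<le> N x + N y"
  by (simp add: is_norm_def)

lemma is_norm_minus: "is_norm N \<Longrightarrow> N (- x) = N x"
  using is_norm_scaleR[of N "-1" x] by simp

lemma is_norm_minus_commute: "is_norm N \<Longrightarrow> N (x - y) = N (y - x)"
  using is_norm_minus[of N "x - y"] by simp

lemma is_norm_triangle_sub: "is_norm N \<Longrightarrow> N (a - c) \<le> N (a - b) + N (b - c)"
  using is_norm_triangle[of N "a - b" "b - c"] by simp

lemma is_norm_diff_le_add: "is_norm N \<Longrightarrow> N (x - y) \<le> N x + N y"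
  using is_norm_triangle[of N x "- y"] is_norm_minus[of N y] by simp

lemma is_norm_abs_diff_le: "is_norm N \<Longrightarrow> \<bar>N x - N y\<bar> \<le> N (x - y)"
  using is_norm_triangle_sub[of N x 0 y] is_norm_triangle_sub[of N y 0 x]
    is_norm_minus_commute[of N x y]
  by (simp add: abs_le_iff)

lemma is_norm_sum: "is_norm N \<Longrightarrow> N (sum g A) \<le> (\<Sum>i\<in>A. N (g i))"
proof (induction A rule: infinite_finite_induct)
  case (insert a A)
  then show ?case using is_norm_triangle[of N "g a" "sum g A"] by simp
qed (simp_all add: is_norm_zero)

lemma is_norm_le_norm:
  fixes N :: "'a::euclidean_space \<Rightarrow> real"
  assumes n: "is_norm N"
  obtains K where "K > 0" "\<And>x. N x \<le> K * norm x"
proof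
  define K where "K = (\<Sum>i\<in>Basis. N i) + 1"
  have "(\<Sum>i\<in>Basis. N i) \<ge> 0" by (intro sum_nonneg) (simp add: is_norm_nonneg[OF n])
  then show "K > 0" unfolding K_def by simp
  fix x :: 'a
  have "N x = N (\<Sum>i\<in>Basis. (x \<bullet> i) *\<^sub>R i)" by (simp add: euclidean_representation)
  also have "\<dots> \<le> (\<Sum>i\<in>Basis. N ((x \<bullet> i) *\<^sub>R i))" by (rule is_norm_sum[OF n])
  also have "\<dots> = (\<Sum>i\<in>Basis. \<bar>x \<bullet> i\<bar> * N i)" by (simp add: is_norm_scaleR[OF n])
  also have "\<dots> \<le> (\<Sum>i\<in>Basis. norm x * N i)"
    by (rule sum_mono) (simp add: mult_right_mono Basis_le_norm is_norm_nonneg[OF n])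
  also have "\<dots> = norm x * (\<Sum>i\<in>Basis. N i)" by (simp add: sum_distrib_left)
  also have "\<dots> \<le> K * norm x" unfolding K_def by (simp add: algebra_simps)
  finally show "N x \<le> K * norm x" .
qed

lemma tendsto_is_norm:
  fixes N :: "'a::euclidean_space \<Rightarrow> real"
  assumes n: "is_norm N" and lim: "(g \<longlongrightarrow> l) F"
  shows "((\<lambda>s. N (g s)) \<longlongrightarrow> N l) F"
proof -
  obtain K where K: "K > 0" "\<And>x. N x \<le> K * norm x" using is_norm_le_norm[OF n] by blast
  have "((\<lambda>s. norm (g s - l)) \<longlongrightarrow> 0) F"
    using lim by (intro tendsto_norm_zero) (simp add: Lim_null[symmetric])
  then have lim0: "((\<lambda>s. K * norm (g s - l)) \<longlongrightarrow> 0) F" by (rule tendsto_mult_right_zero)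
  have "norm (N (g s) - N l) \<le> norm (K * norm (g s - l)) * 1" for s
  proof -
    have "\<bar>N (g s) - N l\<bar> \<le> K * norm (g s - l)"
      using is_norm_abs_diff_le[OF n, of "g s" l] K(2)[of "g s - l"] by linarith
    then show ?thesis using K(1) by simp
  qed
  then have "((\<lambda>s. N (g s) - N l) \<longlongrightarrow> 0) F"
    by (intro tendsto_0_le[OF lim0 always_eventually]) blast
  then show ?thesis by (simp add: Lim_null[symmetric])
qed

lemma continuous_on_is_norm:
  fixes N :: "'a::euclidean_space \<Rightarrow> real"
  assumes "is_norm N" "continuous_on S g"
  shows "continuous_on S (\<lambda>s. N (g s))"
  using assms unfolding continuous_on_def by (auto intro: tendsto_is_norm)


section \<open>A comparison principle for right Dini derivatives\<close>

lemma continuous_on_nonpos_right_induct: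
  fixes w :: "real \<Rightarrow> real"
  assumes cont: "continuous_on {a..b} w" and start: "w a \<le> 0"
    and step: "\<And>t. a \<le> t \<Longrightarrow> t < b \<Longrightarrow> w t \<le> 0 \<Longrightarrow> eventually (\<lambda>y. w y \<le> 0) (at_right t)"
    and t: "t \<in> {a..b}"
  shows "w t \<le> 0"
proof (rule ccontr)
  assume "\<not> w t \<le> 0"
  define S where "S = {s\<in>{a..b}. w s > 0}"
  define t1 where "t1 = Inf S"
  have "t \<in> S" using t \<open>\<not> w t \<le> 0\<close> by (simp add: S_def)
  then have S: "S \<noteq> {}" "bdd_below S" unfolding S_def by (auto intro: bdd_belowI[of _ a])
  have lower: "t1 \<le> s" if "s \<in> S" for s unfolding t1_def using S that by (auto intro: cInf_lower)
  have "a \<le> t1" unfolding t1_def by (rule cInf_greatest[OF S(1)]) (auto simp: S_def)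
  have "t1 \<le> t" using lower \<open>t \<in> S\<close> .
  have "w t1 \<le> 0"
  proof (rule ccontr)
    assume neg: "\<not> w t1 \<le> 0"
    then have "a < t1" using start \<open>a \<le> t1\<close> by (cases "t1 = a") auto
    have "(w \<longlongrightarrow> w t1) (at t1 within {a..b})"
      using cont \<open>a \<le> t1\<close> \<open>t1 \<le> t\<close> t by (simp add: continuous_on_def)
    then have "eventually (\<lambda>s. w s > 0) (at t1 within {a..b})"
      using neg by (intro order_tendstoD) auto
    then obtain d where d: "d > 0" "\<And>s. s \<in> {a..b} \<Longrightarrow> s \<noteq> t1 \<Longrightarrow> dist s t1 < d \<Longrightarrow> w s > 0"
      unfolding eventually_at by blast
    define s where "s = max a (t1 - d/2)"
    have "s \<in> S" using d \<open>a < t1\<close> \<open>t1 \<le> t\<close> t by (auto simp: S_def s_def dist_real_def)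
    then show False using lower[of s] d(1) \<open>a < t1\<close> by (auto simp: s_def)
  qed
  then have "t1 < b" using \<open>t1 \<le> t\<close> \<open>\<not> w t \<le> 0\<close> t by (cases "t1 = t") auto
  from step[OF \<open>a \<le> t1\<close> this \<open>w t1 \<le> 0\<close>] obtain b' where
    b': "b' > t1" "\<And>y. t1 < y \<Longrightarrow> y < b' \<Longrightarrow> w y \<le> 0"
    unfolding eventually_at_right_field by blast
  obtain s where s: "s \<in> S" "s < b'" using cInf_less_iff[OF S] b'(1) unfolding t1_def by blast
  have "t1 < s" using lower[OF s(1)] \<open>w t1 \<le> 0\<close> s(1) by (cases "s = t1") (auto simp: S_def)
  then show False using b'(2)[OF \<open>t1 < s\<close> s(2)] s(1) by (simp add: S_def)
qed

lemma eventually_above_tangent_at_right: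
  fixes v :: "real \<Rightarrow> real"
  assumes "(v has_real_derivative D) (at t)" "e > 0"
  shows "eventually (\<lambda>y. v t + (y - t) * (D - e) \<le> v y) (at_right t)"
proof -
  have "((\<lambda>y. (v y - v t) / (y - t)) \<longlongrightarrow> D) (at_right t)"
    using has_field_derivative_at_within[OF assms(1)] by (simp add: has_field_derivative_iff)
  then have "eventually (\<lambda>y. D - e < (v y - v t) / (y - t)) (at_right t)"
    using assms(2) by (intro order_tendstoD(1)) auto
  then show ?thesis using eventually_at_right_less[of t]
  proof eventually_elim
    case (elim y)
    then have "(D - e) * (y - t) < v y - v t" by (simp add: pos_less_divide_eq)
    then show ?case by (simp add: algebra_simps)
  qed
qed

lemma has_vector_derivative_right_remainder:
  fixes x :: "real \<Rightarrow> 'a::real_normed_vector"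
  assumes "(x has_vector_derivative v) (at t within {t..})" "e > 0"
  shows "eventually (\<lambda>y. norm (x y - x t - (y - t) *\<^sub>R v) \<le> e * (y - t)) (at_right t)"
proof -
  have "((\<lambda>y. (1 / norm (y - t)) *\<^sub>R (x y - (x t + (y - t) *\<^sub>R v))) \<longlongrightarrow> 0) (at t within {t..})"
    using assms(1) unfolding has_vector_derivative_def has_derivative_within by blast
  then have "((\<lambda>y. norm ((1 / norm (y - t)) *\<^sub>R (x y - (x t + (y - t) *\<^sub>R v)))) \<longlongrightarrow> 0) (at_right t)"
    by (intro tendsto_norm_zero) (rule tendsto_within_subset, auto)
  then have "eventually (\<lambda>y. norm ((1 / norm (y - t)) *\<^sub>R (x y - (x t + (y - t) *\<^sub>R v))) < e) (at_right t)"
    using assms(2) by (rule order_tendstoD(2))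
  then show ?thesis using eventually_at_right_less[of t]
  proof eventually_elim
    case (elim y)
    then have "norm (x y - (x t + (y - t) *\<^sub>R v)) < e * (y - t)" by (simp add: pos_divide_less_eq)
    then show ?case by (simp add: algebra_simps)
  qed
qed

lemma is_norm_right_remainder:
  fixes x :: "real \<Rightarrow> 'a::euclidean_space"
  assumes n: "is_norm N" and deriv: "(x has_vector_derivative v) (at t within {t..})" and e: "e > 0"
  shows "eventually (\<lambda>s. N (x s - x t - (s - t) *\<^sub>R v) \<le> e * (s - t)) (at_right t)"
proof -
  obtain K where K: "K > 0" "\<And>y. N y \<le> K * norm y" using is_norm_le_norm[OF n] by blast
  have "e / K > 0" using e K by simp
  from has_vector_derivative_right_remainder[OF deriv this] show ?thesis
  proof eventually_elim
    case (elim s)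
    have "N (x s - x t - (s - t) *\<^sub>R v) \<le> K * norm (x s - x t - (s - t) *\<^sub>R v)" by (rule K(2))
    also have "\<dots> \<le> K * (e / K * (s - t))" using elim K(1) by (intro mult_left_mono) auto
    finally show ?case using K(1) by simp
  qed
qed

text \<open>\<open>exp_integral l s\<close> is the integral of \<open>exp (l * \<tau>)\<close> over \<open>[0, s]\<close>.\<close>
definition exp_integral :: "real \<Rightarrow> real \<Rightarrow> real" where
  "exp_integral l s = (if l = 0 then s else (exp (l * s) - 1) / l)"

lemma exp_integral_0 [simp]: "exp_integral l 0 = 0"
  by (simp add: exp_integral_def)

lemma exp_integral_eq: "l * exp_integral l s + 1 = exp (l * s)"
  by (simp add: exp_integral_def)

lemma exp_integral_has_real_derivative:
  "(exp_integral l has_real_derivative exp (l * s)) (at s)"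
proof (cases "l = 0")
  case False
  have "((\<lambda>s. (exp (l * s) - 1) / l) has_real_derivative (exp (l * s) * l) / l) (at s)"
    by (auto intro!: derivative_eq_intros)
  then show ?thesis using False by (simp add: exp_integral_def[abs_def])
qed (simp add: exp_integral_def[abs_def])

lemma exp_integral_mono:
  assumes "0 \<le> s" "s \<le> s'"
  shows "exp_integral l s \<le> exp_integral l s'"
proof -
  consider "l = 0" | "l > 0" | "l < 0" by linarith
  then show ?thesis
  proof cases
    case 2
    then have "exp (l * s) \<le> exp (l * s')" using assms by (simp add: mult_left_mono)
    then show ?thesis using 2 by (simp add: exp_integral_def divide_right_mono)
  next
    case 3
    then have "exp (l * s') \<le> exp (l * s)" using assms by (simp add: mult_left_mono_neg)
    then show ?thesis using 3 by (simp add: exp_integral_def divide_simps)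
  qed (use assms in \<open>simp add: exp_integral_def\<close>)
qed

lemma exp_integral_nonneg: "0 \<le> s \<Longrightarrow> 0 \<le> exp_integral l s"
  using exp_integral_mono[of 0 s l] by simp

lemma exp_integral_less:
  assumes y: "y > 0"
    and T: "ereal T < (if l = 0 then ereal y else if l * y + 1 \<le> 0 then \<infinity> else ereal (ln (l * y + 1) / l))"
  shows "exp_integral l T < y"
proof -
  consider "l = 0" | "l \<noteq> 0" "l * y + 1 \<le> 0" | "l > 0" "l * y + 1 > 0" | "l < 0" "l * y + 1 > 0"
    by linarith
  then show ?thesis
  proof cases
    case 1
    then show ?thesis using T by (simp add: exp_integral_def)
  next
    case 2
    have "l < 0"
    proof (rule ccontr)
      assume "\<not> l < 0"
      then have "l * y \<ge> 0" using y by simp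
      then show False using 2 by simp
    qed
    have "(exp (l * T) - 1) / l < -1 / l"
      using \<open>l < 0\<close> by (intro divide_strict_right_mono_neg) auto
    also have "-1 / l \<le> y"
      using neg_divide_le_eq[OF \<open>l < 0\<close>, of "-1" y] 2 by (simp add: mult.commute)
    finally show ?thesis using 2 by (simp add: exp_integral_def)
  next
    case 3
    then have "l * T < ln (l * y + 1)" using T by (simp add: less_divide_eq mult.commute)
    then have "exp (l * T) < l * y + 1" using 3 by (metis exp_less_cancel_iff exp_ln)
    then show ?thesis using 3 by (simp add: exp_integral_def divide_less_eq mult.commute)
  next
    case 4
    then have "ln (l * y + 1) < l * T" using T by (simp add: neg_less_divide_eq mult.commute)
    then have "l * y + 1 < exp (l * T)" using 4 by (metis exp_less_cancel_iff exp_ln)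
    then show ?thesis using 4 by (simp add: exp_integral_def neg_divide_less_eq mult.commute)
  qed
qed

lemma affine_ode_solution_has_real_derivative:
  fixes l a v0 c :: real
  defines "v \<equiv> \<lambda>s. exp (l * (s - a)) * v0 + c * exp_integral l (s - a)"
  shows "(v has_real_derivative l * v s + c) (at s)"
proof -
  have "((\<lambda>s. exp (l * (s - a))) has_real_derivative exp (l * (s - a)) * l) (at s)"
    by (auto intro!: derivative_eq_intros)
  moreover have "((\<lambda>s. exp_integral l (s - a)) has_real_derivative exp (l * (s - a)) * 1) (at s)"
    by (rule DERIV_chain2[OF exp_integral_has_real_derivative]) (auto intro!: derivative_eq_intros)
  ultimately have "(v has_real_derivative exp (l * (s - a)) * l * v0 + c * (exp (l * (s - a)) * 1)) (at s)"
    unfolding v_def by (intro DERIV_add DERIV_cmult DERIV_cmult_right)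
  also have "exp (l * (s - a)) * l * v0 + c * (exp (l * (s - a)) * 1) = l * v s + c"
    unfolding v_def exp_integral_eq[of l "s - a", symmetric] by (simp add: algebra_simps)
  finally show ?thesis .
qed

text \<open>Hypothesis \<open>dini\<close> says that the upper right Dini derivative of \<open>u\<close> is at most \<open>l * u + c\<close>.\<close>
lemma dini_comparison_strict:
  fixes u v :: "real \<Rightarrow> real"
  assumes cont: "continuous_on {a..b} u"
    and v: "\<And>s. (v has_real_derivative l * v s + (c + e)) (at s)" and start: "u a \<le> v a" and e: "e > 0"
    and dini: "\<And>t e. a \<le> t \<Longrightarrow> t < b \<Longrightarrow> e > 0 \<Longrightarrow>
         eventually (\<lambda>y. u y \<le> u t + (y - t) * (l * u t + c + e)) (at_right t)"
    and t: "t \<in> {a..b}"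
  shows "u t \<le> v t"
proof -
  have "continuous_on {a..b} v"
    using v by (meson DERIV_continuous continuous_at_imp_continuous_on)
  then have "u t - v t \<le> 0"
  proof (rule continuous_on_nonpos_right_induct[OF continuous_on_diff[OF cont]])
    fix s assume s: "a \<le> s" "s < b" "u s - v s \<le> 0"
    have "((\<lambda>y. 1 + l * (y - s)) \<longlongrightarrow> 1 + l * (s - s)) (at_right s)"
      by (intro tendsto_intros)
    then have pos: "eventually (\<lambda>y. 1 + l * (y - s) > 0) (at_right s)"
      by (intro order_tendstoD(1)) auto
    have "e / 2 > 0" using e by simp
    from dini[OF s(1,2) this] eventually_above_tangent_at_right[OF v this] pos
      eventually_at_right_less[of s]
    show "eventually (\<lambda>y. u y - v y \<le> 0) (at_right s)"
    proof eventually_elim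
      case (elim y)
      then have "u y - v y \<le> (u s - v s) * (1 + l * (y - s))" using e by (simp add: algebra_simps)
      also have "\<dots> \<le> 0" using s(3) elim(3) by (simp add: mult_nonpos_nonneg)
      finally show ?case .
    qed
  qed (use start t in auto)
  then show ?thesis by simp
qed

lemma dini_comparison:
  fixes u :: "real \<Rightarrow> real"
  assumes cont: "continuous_on {a..b} u"
    and dini: "\<And>t e. a \<le> t \<Longrightarrow> t < b \<Longrightarrow> e > 0 \<Longrightarrow>
         eventually (\<lambda>y. u y \<le> u t + (y - t) * (l * u t + c + e)) (at_right t)"
    and t: "t \<in> {a..b}"
  shows "u t \<le> exp (l * (t - a)) * u a + c * exp_integral l (t - a)"
proof (rule field_le_epsilon)
  fix e :: real assume e: "e > 0"
  define E P where "E = exp (l * (t - a))" and "P = exp_integral l (t - a)"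
  have "P \<ge> 0" using exp_integral_nonneg t by (simp add: P_def)
  then have K: "E + P + 1 > 0" by (simp add: E_def add_pos_nonneg)
  define d where "d = e / (E + P + 1)"
  have "d > 0" using K e by (simp add: d_def)
  have "u t \<le> E * (u a + d) + (c + d) * P"
    using dini_comparison_strict[OF cont
        affine_ode_solution_has_real_derivative[of l a "u a + d" "c + d"] _ \<open>d > 0\<close> dini t] \<open>d > 0\<close>
    by (simp add: E_def P_def)
  also have "\<dots> = E * u a + c * P + d * (E + P)" by (simp add: algebra_simps)
  also have "d * (E + P) \<le> e" using K e by (simp add: d_def divide_simps)
  finally show "u t \<le> E * u a + c * P + e" by simp
qed


section \<open>Norm estimates along trajectories\<close>

lemma compatible_weak_pairing_backward_euler:
  assumes n: "is_norm N" and wp: "compatible_weak_pairing N WP" and h: "h \<ge> 0"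
    and os: "y \<noteq> 0 \<Longrightarrow> WP d y \<le> c * (N y)\<^sup>2"
  shows "(1 - h * c) * N y \<le> N (y - h *\<^sub>R d)"
proof (cases "y = 0")
  case True
  then show ?thesis using is_norm_zero[OF n] is_norm_nonneg[OF n] by simp
next
  case False
  define w where "w = y - h *\<^sub>R d"
  have sub: "WP (w + h *\<^sub>R d) y \<le> WP w y + WP (h *\<^sub>R d) y"
    and hom: "WP (h *\<^sub>R d) y = h * WP d y"
    and cs: "\<bar>WP w y\<bar> \<le> sqrt (WP w w) * sqrt (WP y y)"
    and sq: "\<And>v. WP v v = (N v)\<^sup>2"
    using wp h unfolding compatible_weak_pairing_def by blast+
  have "WP w y \<le> N w * N y" using cs by (simp add: sq is_norm_nonneg[OF n])
  moreover have "w + h *\<^sub>R d = y" by (simp add: w_def)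
  ultimately have "(N y)\<^sup>2 \<le> N w * N y + h * WP d y" using sub hom sq[of y] by simp
  also have "h * WP d y \<le> h * (c * (N y)\<^sup>2)" using os[OF False] h by (rule mult_left_mono)
  finally have "N y * N y \<le> (N w + h * c * N y) * N y" by (simp add: power2_eq_square algebra_simps)
  then have "N y \<le> N w + h * c * N y" using is_norm_pos[OF n False] by simp
  then show ?thesis unfolding w_def by (simp add: algebra_simps)
qed

lemma compatible_weak_pairing_euler_step:
  assumes n: "is_norm N" and wp: "compatible_weak_pairing N WP" and h: "h \<ge> 0"
    and os: "y1 \<noteq> 0 \<Longrightarrow> WP (F1 - F0) y1 \<le> c * (N y1)\<^sup>2"
  shows "(1 - h * c) * N y1 \<le> N y0 + N (y1 - y0 - h *\<^sub>R v) + h * N (v - F1) + h * N F0"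
proof -
  have "y1 - h *\<^sub>R (F1 - F0) = (y0 + (y1 - y0 - h *\<^sub>R v)) + (h *\<^sub>R (v - F1) + h *\<^sub>R F0)"
    by (simp add: scaleR_diff_right)
  then have "N (y1 - h *\<^sub>R (F1 - F0))
      \<le> N (y0 + (y1 - y0 - h *\<^sub>R v)) + N (h *\<^sub>R (v - F1) + h *\<^sub>R F0)"
    using is_norm_triangle[OF n] by metis
  also have "\<dots> \<le> (N y0 + N (y1 - y0 - h *\<^sub>R v)) + (N (h *\<^sub>R (v - F1)) + N (h *\<^sub>R F0))"
    by (intro add_mono is_norm_triangle[OF n])
  finally show ?thesis
    using compatible_weak_pairing_backward_euler[OF n wp h os] h by (simp add: is_norm_scaleR[OF n])
qed

lemma right_dini_norm_bound:
  fixes x :: "real \<Rightarrow> 'a::euclidean_space" and F :: "'a \<Rightarrow> 'a"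
  assumes n: "is_norm N" and wp: "compatible_weak_pairing N WP"
    and deriv: "(x has_vector_derivative v) (at t within {t..})"
    and cont: "(x \<longlongrightarrow> x t) (at_right t)"
    and os: "\<And>s. t < s \<Longrightarrow> x s - p \<noteq> 0 \<Longrightarrow> WP (F (x s) - F p) (x s - p) \<le> c * (N (x s - p))\<^sup>2"
    and lip: "\<And>s. t < s \<Longrightarrow> N (v - F (x s)) \<le> B + M * N (x t - x s)"
    and C: "B + N (F p) \<le> C" and e: "e > 0"
  shows "eventually (\<lambda>s. N (x s - p) \<le> N (x t - p) + (s - t) * (c * N (x t - p) + C + e)) (at_right t)"
proof -
  have remainder: "eventually (\<lambda>s. N (x s - x t - (s - t) *\<^sub>R v) \<le> e / 3 * (s - t)) (at_right t)"
    using e by (intro is_norm_right_remainder[OF n deriv]) simp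
  have "((\<lambda>s. M * N (x t - x s)) \<longlongrightarrow> M * N (x t - x t)) (at_right t)"
    using cont by (intro tendsto_intros tendsto_is_norm[OF n])
  then have drift: "eventually (\<lambda>s. M * N (x t - x s) < e / 3) (at_right t)"
    using e by (intro order_tendstoD(2)) (auto simp: is_norm_zero[OF n])
  have "((\<lambda>s. c * (N (x s - p) - N (x t - p))) \<longlongrightarrow> c * (N (x t - p) - N (x t - p))) (at_right t)"
    using cont by (intro tendsto_intros tendsto_is_norm[OF n])
  then have slope: "eventually (\<lambda>s. c * (N (x s - p) - N (x t - p)) < e / 3) (at_right t)"
    using e by (intro order_tendstoD(2)) auto
  show ?thesis using remainder drift slope eventually_at_right_less[of t]
  proof eventually_elim
    case (elim s)
    define h where "h = s - t"
    have h: "h > 0" using elim(4) by (simp add: h_def)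
    have "(1 - h * c) * N (x s - p)
        \<le> N (x t - p) + N (x s - x t - h *\<^sub>R v) + h * N (v - F (x s)) + h * N (F p)"
      using compatible_weak_pairing_euler_step[OF n wp, of h "x s - p" "F (x s)" "F p" c "x t - p" v]
        os elim(4) h
      by simp
    also have "\<dots> \<le> N (x t - p) + e / 3 * h + h * (B + M * N (x t - x s)) + h * N (F p)"
      using elim(1) lip[OF elim(4)] h by (intro add_mono mult_left_mono) (auto simp: h_def)
    finally have "(1 - h * c) * N (x s - p) \<le> N (x t - p) + e / 3 * h + h * (B + M * N (x t - x s)) + h * N (F p)" .
    moreover have "h * (M * N (x t - x s)) \<le> h * (e / 3)"
      using elim(2) h by (intro mult_left_mono) auto
    moreover have "h * (c * (N (x s - p) - N (x t - p))) \<le> h * (e / 3)"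
      using elim(3) h by (intro mult_left_mono) auto
    ultimately have "N (x s - p) \<le> N (x t - p) + h * (c * N (x t - p) + B + N (F p) + e)"
      by (simp add: algebra_simps)
    also have "\<dots> \<le> N (x t - p) + h * (c * N (x t - p) + C + e)" using C h by simp
    finally show ?case by (simp add: h_def)
  qed
qed


section \<open>Sampling and discrete-time decay\<close>

lemma nat_floor_divide_eq:
  fixes T t :: real
  assumes "T > 0" "real k * T \<le> t" "t < real (Suc k) * T"
  shows "nat \<lfloor>t / T\<rfloor> = k"
proof -
  have "real k \<le> t / T" using assms by (simp add: pos_le_divide_eq)
  moreover have "t / T < real k + 1" using assms by (simp add: pos_divide_less_eq algebra_simps)
  ultimately show ?thesis by linarith
qed

lemma sampling_interval_exists:
  fixes T t :: real
  assumes "T > 0" "t \<ge> 0"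
  obtains k where "real k * T \<le> t" "t < real (Suc k) * T"
proof
  have "real (nat \<lfloor>t / T\<rfloor>) = of_int \<lfloor>t / T\<rfloor>" using assms by simp
  then show "real (nat \<lfloor>t / T\<rfloor>) * T \<le> t" and "t < real (Suc (nat \<lfloor>t / T\<rfloor>)) * T"
    using assms by (simp_all add: pos_le_divide_eq[symmetric] pos_divide_less_eq[symmetric]) linarith+
qed

lemma power_le_exp_sampling:
  fixes r T t :: real
  assumes "0 < r" "r < 1" "T > 0" "real k * T \<le> t" "t < real (Suc k) * T"
  shows "r ^ k \<le> exp (- (- ln r / T) * t) / r"
proof -
  have "t / T - 1 < real k" using assms by (simp add: pos_divide_less_eq algebra_simps)
  then have "real k * ln r \<le> (t / T - 1) * ln r" using assms by (intro mult_right_mono_neg) auto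
  moreover have "r ^ k = exp (real k * ln r)" using assms(1) by (simp add: exp_of_nat_mult)
  ultimately have "r ^ k \<le> exp ((t / T - 1) * ln r)" by simp
  also have "exp ((t / T - 1) * ln r) = exp (- (- ln r / T) * t) * exp (- ln r)"
    using assms(3) by (simp add: field_simps flip: exp_add)
  also have "\<dots> = exp (- (- ln r / T) * t) / r" using assms(1) by (simp add: exp_minus field_simps)
  finally show ?thesis .
qed

text \<open>The hypotheses say that \<open>I - A\<close> is a nonsingular M-matrix.\<close>
lemma weighted_l1_contraction_2x2:
  fixes a11 a12 a21 a22 :: real
  assumes "a11 \<ge> 0" "a12 \<ge> 0" "a21 \<ge> 0" "a22 \<ge> 0" "a11 < 1" "a22 < 1"
    "a12 * a21 < (1 - a11) * (1 - a22)"
  obtains w r where "w > 0" "0 < r" "r < 1" "a11 + w * a21 \<le> r" "a12 + w * a22 \<le> r * w"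
proof -
  define D where "D = (1 - a11) * (1 - a22) - a12 * a21"
  define d where "d = D / (2 * (a21 + 1))"
  have D: "D > 0" using assms(7) by (simp add: D_def)
  then have d: "d > 0" using assms(3) by (simp add: d_def)
  have "d * a21 < D"
  proof -
    have "a21 / (2 * (a21 + 1)) < 1" using assms(3) by (simp add: divide_simps)
    then have "D * (a21 / (2 * (a21 + 1))) < D * 1" using D by (intro mult_strict_left_mono)
    then show ?thesis by (simp add: d_def)
  qed
  define w where "w = (a12 + d) / (1 - a22)"
  have w: "w > 0" using assms d by (simp add: w_def)
  have w1: "w * (1 - a22) = a12 + d" using assms(6) by (simp add: w_def)
  have "w * a21 * (1 - a22) = (a12 + d) * a21" by (metis w1 mult.commute mult.left_commute)
  also have "\<dots> < (1 - a11) * (1 - a22)" using \<open>d * a21 < D\<close> by (simp add: D_def algebra_simps)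
  finally have "a11 + w * a21 < 1" using assms(6) by simp
  define r where "r = max (1/2) (max (a11 + w * a21) ((w - d) / w))"
  have "r < 1" using \<open>a11 + w * a21 < 1\<close> w d by (simp add: r_def)
  have "a12 + w * a22 = w - d" using w1 by (simp add: algebra_simps)
  also have "\<dots> = (w - d) / w * w" using w by simp
  also have "\<dots> \<le> r * w" using w by (intro mult_right_mono) (auto simp: r_def)
  finally show ?thesis using that[of w r] w \<open>r < 1\<close> by (simp add: r_def)
qed

lemma weighted_l1_geometric_decay:
  fixes X e :: "nat \<Rightarrow> real"
  assumes "\<And>k. X k \<ge> 0" "\<And>k. e k \<ge> 0" "w > 0" "r \<ge> 0"
    "\<And>k. X (Suc k) \<le> a11 * X k + a12 * e k" "\<And>k. e (Suc k) \<le> a21 * X k + a22 * e k"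
    "a11 + w * a21 \<le> r" "a12 + w * a22 \<le> r * w"
  shows "X k + w * e k \<le> r ^ k * (X 0 + w * e 0)"
proof (induction k)
  case (Suc k)
  have "X (Suc k) + w * e (Suc k) \<le> a11 * X k + a12 * e k + w * (a21 * X k + a22 * e k)"
    using assms(3,5,6) by (intro add_mono mult_left_mono) auto
  also have "\<dots> = (a11 + w * a21) * X k + (a12 + w * a22) * e k" by (simp add: algebra_simps)
  also have "\<dots> \<le> r * X k + (r * w) * e k"
    using assms(1,2,7,8) by (intro add_mono mult_right_mono) auto
  also have "\<dots> = r * (X k + w * e k)" by (simp add: algebra_simps)
  also have "\<dots> \<le> r * (r ^ k * (X 0 + w * e 0))" using Suc.IH assms(4) by (rule mult_left_mono)
  finally show ?case by simp
qed simp

lemma sqrt_sum_squares_le_of_sum_le: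
  fixes a b a0 b0 M :: real
  assumes "0 \<le> a" "0 \<le> b" "0 \<le> M" "a + b \<le> M * (a0 + b0)"
  shows "sqrt (a\<^sup>2 + b\<^sup>2) \<le> M * sqrt 2 * sqrt (a0\<^sup>2 + b0\<^sup>2)"
proof -
  have "(a0 + b0)\<^sup>2 \<le> 2 * (a0\<^sup>2 + b0\<^sup>2)"
    using sum_squares_ge_zero[of "a0 - b0" 0] by (simp add: power2_eq_square algebra_simps)
  then have "a0 + b0 \<le> sqrt 2 * sqrt (a0\<^sup>2 + b0\<^sup>2)" by (simp add: real_le_rsqrt flip: real_sqrt_mult)
  then have "M * (a0 + b0) \<le> M * (sqrt 2 * sqrt (a0\<^sup>2 + b0\<^sup>2))" using assms(3) by (rule mult_left_mono)
  then show ?thesis using sqrt_sum_squares_le_sum[OF assms(1,2)] assms(4) by simp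
qed

lemma real_of_ereal_Sup_upper:
  fixes S :: "ereal set"
  assumes "Sup S < \<infinity>" "ereal r \<in> S"
  shows "r \<le> real_of_ereal (Sup S)"
proof -
  have "ereal r \<le> Sup S" using assms(2) by (rule Sup_upper)
  then show ?thesis using assms(1) by (cases "Sup S") auto
qed

lemma real_of_ereal_Sup_nonneg:
  fixes S :: "ereal set"
  assumes "\<And>s. s \<in> S \<Longrightarrow> 0 \<le> s"
  shows "0 \<le> real_of_ereal (Sup S)"
proof (cases "S = {}")
  case False
  then have "0 \<le> Sup S" using assms by (meson Sup_upper order_trans ex_in_conv)
  then show ?thesis by (simp add: real_of_ereal_pos)
qed (simp add: bot_ereal_def)

lemma Lip_x_nonneg: "is_norm Nx \<Longrightarrow> is_norm Ny \<Longrightarrow> 0 \<le> real_of_ereal (Lip_x Nx Ny X Z f)"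
  unfolding Lip_x_def by (rule real_of_ereal_Sup_nonneg) (auto simp: is_norm_nonneg)

lemma Lip_z_nonneg: "is_norm Nz \<Longrightarrow> is_norm Ny \<Longrightarrow> 0 \<le> real_of_ereal (Lip_z Nz Ny X Z f)"
  unfolding Lip_z_def by (rule real_of_ereal_Sup_nonneg) (auto simp: is_norm_nonneg)

lemma Lip_x_le:
  assumes nx: "is_norm Nx" and ny: "is_norm Ny" and fin: "Lip_x Nx Ny X Z f < \<infinity>"
    and "x1 \<in> X" "x2 \<in> X" "z \<in> Z"
  shows "Ny (f x1 z - f x2 z) \<le> real_of_ereal (Lip_x Nx Ny X Z f) * Nx (x1 - x2)"
proof (cases "x1 = x2")
  case False
  have "Ny (f x1 z - f x2 z) / Nx (x1 - x2) \<le> real_of_ereal (Lip_x Nx Ny X Z f)"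
    using fin unfolding Lip_x_def by (rule real_of_ereal_Sup_upper) (use assms False in blast)
  then show ?thesis using is_norm_pos[OF nx, of "x1 - x2"] False by (simp add: divide_le_eq)
qed (simp add: is_norm_zero[OF nx] is_norm_zero[OF ny])

lemma Lip_z_le:
  assumes nz: "is_norm Nz" and ny: "is_norm Ny" and fin: "Lip_z Nz Ny X Z f < \<infinity>"
    and "x \<in> X" "z1 \<in> Z" "z2 \<in> Z"
  shows "Ny (f x z1 - f x z2) \<le> real_of_ereal (Lip_z Nz Ny X Z f) * Nz (z1 - z2)"
proof (cases "z1 = z2")
  case False
  have "Ny (f x z1 - f x z2) / Nz (z1 - z2) \<le> real_of_ereal (Lip_z Nz Ny X Z f)"
    using fin unfolding Lip_z_def by (rule real_of_ereal_Sup_upper) (use assms False in blast)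
  then show ?thesis using is_norm_pos[OF nz, of "z1 - z2"] False by (simp add: divide_le_eq)
qed (simp add: is_norm_zero[OF nz] is_norm_zero[OF ny])

lemma osLip_x_le:
  assumes nx: "is_norm Nx" and bound: "osLip_x WP Nx X Z f \<le> ereal c"
    and "x1 \<in> X" "x2 \<in> X" "z \<in> Z" "x1 \<noteq> x2"
  shows "WP (f x1 z - f x2 z) (x1 - x2) \<le> c * (Nx (x1 - x2))\<^sup>2"
proof -
  have "ereal (WP (f x1 z - f x2 z) (x1 - x2) / (Nx (x1 - x2))\<^sup>2) \<le> osLip_x WP Nx X Z f"
    unfolding osLip_x_def by (rule Sup_upper) (use assms in blast)
  then have "WP (f x1 z - f x2 z) (x1 - x2) / (Nx (x1 - x2))\<^sup>2 \<le> c"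
    using bound by (metis ereal_less_eq(3) order_trans)
  moreover have "(Nx (x1 - x2))\<^sup>2 > 0" using is_norm_pos[OF nx, of "x1 - x2"] assms(6) by simp
  ultimately show ?thesis by (simp add: divide_le_eq)
qed

lemma osLip_le:
  assumes nx: "is_norm Nx" and bound: "osLip WP Nx X F \<le> ereal c"
    and "x1 \<in> X" "x2 \<in> X" "x1 \<noteq> x2"
  shows "WP (F x1 - F x2) (x1 - x2) \<le> c * (Nx (x1 - x2))\<^sup>2"
proof -
  have "ereal (WP (F x1 - F x2) (x1 - x2) / (Nx (x1 - x2))\<^sup>2) \<le> osLip WP Nx X F"
    unfolding osLip_def by (rule Sup_upper) (use assms in blast)
  then have "WP (F x1 - F x2) (x1 - x2) / (Nx (x1 - x2))\<^sup>2 \<le> c"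
    using bound by (metis ereal_less_eq(3) order_trans)
  moreover have "(Nx (x1 - x2))\<^sup>2 > 0" using is_norm_pos[OF nx, of "x1 - x2"] assms(5) by simp
  ultimately show ?thesis by (simp add: divide_le_eq)
qed


section \<open>The sampled-data interconnection\<close>

lemma zstar_fixed_point:
  assumes "\<exists>!z. z \<in> Z \<and> G x z = z"
  shows "zstar G Z x \<in> Z" "G x (zstar G Z x) = zstar G Z x"
  using theI'[OF assms] unfolding zstar_def by simp_all

lemma zstar_eqI: "\<exists>!z. z \<in> Z \<and> G x z = z \<Longrightarrow> z \<in> Z \<Longrightarrow> G x z = z \<Longrightarrow> zstar G Z x = z"
  unfolding zstar_def by (rule the1_equality) auto

locale sampled_feedback =
  fixes Nx :: "'x::euclidean_space \<Rightarrow> real" and Nz :: "'z::real_normed_vector \<Rightarrow> real"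
    and WP :: "'x \<Rightarrow> 'x \<Rightarrow> real" and X :: "'x set" and Z :: "'z set"
    and f :: "'x \<Rightarrow> 'z \<Rightarrow> 'x" and G :: "'x \<Rightarrow> 'z \<Rightarrow> 'z"
    and Lfx Lfz LGx LGz \<xi> \<zeta> T :: real and n :: nat
  assumes norm_x: "is_norm Nx" and norm_z: "is_norm Nz"
    and weak_pairing: "compatible_weak_pairing Nx WP"
    and zero_in_X: "0 \<in> X" and zero_in_Z: "0 \<in> Z"
    and G_maps: "\<And>x z. x \<in> X \<Longrightarrow> z \<in> Z \<Longrightarrow> G x z \<in> Z"
    and unique_fixed_point: "\<And>x. x \<in> X \<Longrightarrow> \<exists>!z. z \<in> Z \<and> G x z = z"
    and f_zero: "f 0 0 = 0" and G_zero: "G 0 0 = 0"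
    and f_lip_x: "\<And>x1 x2 z. x1 \<in> X \<Longrightarrow> x2 \<in> X \<Longrightarrow> z \<in> Z \<Longrightarrow>
      Nx (f x1 z - f x2 z) \<le> Lfx * Nx (x1 - x2)"
    and f_lip_z: "\<And>x z1 z2. x \<in> X \<Longrightarrow> z1 \<in> Z \<Longrightarrow> z2 \<in> Z \<Longrightarrow>
      Nx (f x z1 - f x z2) \<le> Lfz * Nz (z1 - z2)"
    and G_lip_x: "\<And>x1 x2 z. x1 \<in> X \<Longrightarrow> x2 \<in> X \<Longrightarrow> z \<in> Z \<Longrightarrow>
      Nz (G x1 z - G x2 z) \<le> LGx * Nx (x1 - x2)"
    and G_lip_z: "\<And>x z1 z2. x \<in> X \<Longrightarrow> z1 \<in> Z \<Longrightarrow> z2 \<in> Z \<Longrightarrow>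
      Nz (G x z1 - G x z2) \<le> LGz * Nz (z1 - z2)"
    and f_oslip: "\<And>x1 x2 z. x1 \<in> X \<Longrightarrow> x2 \<in> X \<Longrightarrow> z \<in> Z \<Longrightarrow> x1 \<noteq> x2 \<Longrightarrow>
      WP (f x1 z - f x2 z) (x1 - x2) \<le> \<xi> * (Nx (x1 - x2))\<^sup>2"
    and f_zstar_oslip: "\<And>x1 x2. x1 \<in> X \<Longrightarrow> x2 \<in> X \<Longrightarrow> x1 \<noteq> x2 \<Longrightarrow>
      WP (f x1 (zstar G Z x1) - f x2 (zstar G Z x2)) (x1 - x2) \<le> - \<zeta> * (Nx (x1 - x2))\<^sup>2"
    and Lfx_nonneg: "0 \<le> Lfx" and Lfz_nonneg: "0 \<le> Lfz" and LGx_nonneg: "0 \<le> LGx"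
    and LGz_nonneg: "0 \<le> LGz" and LGz_less_1: "LGz < 1"
    and zeta_pos: "0 < \<zeta>" and T_pos: "0 < T"
begin

abbreviation z_star :: "'x \<Rightarrow> 'z" where "z_star \<equiv> zstar G Z"

definition Lzstar :: real where "Lzstar = LGx / (1 - LGz)"

definition Lfstar :: real where "Lfstar = Lfx + Lfz * Lzstar"

text \<open>The entries of the matrix \<open>A\<close> with \<open>(X\<^sub>k\<^sub>+\<^sub>1, e\<^sub>k\<^sub>+\<^sub>1) \<le> A (X\<^sub>k, e\<^sub>k)\<close>, where
  \<open>X\<^sub>k = Nx (x (k T))\<close> and \<open>e\<^sub>k = Nz (z\<^sub>k - z_star (x (k T)))\<close>.\<close>
definition gain_xx :: real where
  "gain_xx = exp (- \<zeta> * T) + exp_integral (- \<zeta>) T * Lfz * Lzstar * exp_integral \<xi> T * Lfstar"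

definition gain_xe :: real where
  "gain_xe = exp_integral (- \<zeta>) T * Lfz * (1 + Lzstar * exp_integral \<xi> T * Lfz)"

definition gain_ex :: real where "gain_ex = LGz ^ n * Lzstar * exp_integral \<xi> T * Lfstar"

definition gain_ee :: real where "gain_ee = LGz ^ n * (1 + Lzstar * exp_integral \<xi> T * Lfz)"

lemma Lzstar_nonneg: "0 \<le> Lzstar"
  using LGx_nonneg LGz_less_1 by (simp add: Lzstar_def)

lemma Lfstar_nonneg: "0 \<le> Lfstar"
  using Lfx_nonneg Lfz_nonneg Lzstar_nonneg by (simp add: Lfstar_def)

lemma z_star_in_Z: "x \<in> X \<Longrightarrow> z_star x \<in> Z"
  and z_star_fixed: "x \<in> X \<Longrightarrow> G x (z_star x) = z_star x"
  using zstar_fixed_point[of Z G x, OF unique_fixed_point] by auto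

lemma z_star_zero: "z_star 0 = 0"
  using zstar_eqI[of Z G 0 0, OF unique_fixed_point[OF zero_in_X] zero_in_Z G_zero] .

lemma funpow_G_in_Z: "x \<in> X \<Longrightarrow> z \<in> Z \<Longrightarrow> (G x ^^ m) z \<in> Z"
  by (induction m) (auto intro: G_maps)

lemma funpow_G_z_star: "x \<in> X \<Longrightarrow> (G x ^^ m) (z_star x) = z_star x"
  by (induction m) (simp_all add: z_star_fixed)

lemma funpow_G_contraction:
  assumes "x \<in> X" "z1 \<in> Z" "z2 \<in> Z"
  shows "Nz ((G x ^^ m) z1 - (G x ^^ m) z2) \<le> LGz ^ m * Nz (z1 - z2)"
proof (induction m)
  case (Suc m)
  have "Nz ((G x ^^ Suc m) z1 - (G x ^^ Suc m) z2) \<le> LGz * Nz ((G x ^^ m) z1 - (G x ^^ m) z2)"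
    using G_lip_z funpow_G_in_Z assms by simp
  also have "\<dots> \<le> LGz * (LGz ^ m * Nz (z1 - z2))" using Suc.IH LGz_nonneg by (rule mult_left_mono)
  finally show ?case by simp
qed simp

lemma z_star_lipschitz:
  assumes "a \<in> X" "b \<in> X"
  shows "Nz (z_star a - z_star b) \<le> Lzstar * Nx (a - b)"
proof -
  have "Nz (z_star a - z_star b) = Nz (G a (z_star a) - G b (z_star b))" using assms by (simp add: z_star_fixed)
  also have "\<dots> \<le> Nz (G a (z_star a) - G b (z_star a)) + Nz (G b (z_star a) - G b (z_star b))"
    by (rule is_norm_triangle_sub[OF norm_z])
  also have "\<dots> \<le> LGx * Nx (a - b) + LGz * Nz (z_star a - z_star b)"
    using assms by (intro add_mono G_lip_x G_lip_z z_star_in_Z)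
  finally have "(1 - LGz) * Nz (z_star a - z_star b) \<le> LGx * Nx (a - b)" by (simp add: algebra_simps)
  then show ?thesis using LGz_less_1 by (simp add: Lzstar_def field_simps)
qed

lemma f_z_star_lipschitz:
  assumes "a \<in> X" "b \<in> X"
  shows "Nx (f a (z_star a) - f b (z_star b)) \<le> Lfstar * Nx (a - b)"
proof -
  have "Nx (f a (z_star a) - f b (z_star b))
      \<le> Nx (f a (z_star a) - f b (z_star a)) + Nx (f b (z_star a) - f b (z_star b))"
    by (rule is_norm_triangle_sub[OF norm_x])
  also have "\<dots> \<le> Lfx * Nx (a - b) + Lfz * Nz (z_star a - z_star b)"
    using assms by (intro add_mono f_lip_x f_lip_z z_star_in_Z)
  also have "\<dots> \<le> Lfx * Nx (a - b) + Lfz * (Lzstar * Nx (a - b))"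
    using z_star_lipschitz[OF assms] Lfz_nonneg by (intro add_mono order.refl mult_left_mono) auto
  finally show ?thesis by (simp add: Lfstar_def algebra_simps)
qed

lemma f_deviation_bound:
  assumes "a \<in> X" "b \<in> X" "z \<in> Z"
  shows "Nx (f a z - f b (z_star b)) \<le> Lfz * Nz (z - z_star a) + Lfstar * Nx (a - b)"
proof -
  have "Nx (f a z - f b (z_star b)) \<le> Nx (f a z - f a (z_star a)) + Nx (f a (z_star a) - f b (z_star b))"
    by (rule is_norm_triangle_sub[OF norm_x])
  also have "\<dots> \<le> Lfz * Nz (z - z_star a) + Lfstar * Nx (a - b)"
    using assms by (intro add_mono f_lip_z f_z_star_lipschitz z_star_in_Z)
  finally show ?thesis .
qed

lemma norm_z_star_le: "a \<in> X \<Longrightarrow> Nz (z_star a) \<le> Lzstar * Nx a"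
  using z_star_lipschitz[OF _ zero_in_X, of a] by (simp add: z_star_zero)

lemma gain_nonneg: "0 \<le> gain_xx" "0 \<le> gain_xe" "0 \<le> gain_ex" "0 \<le> gain_ee"
  using T_pos LGz_nonneg Lfz_nonneg Lzstar_nonneg Lfstar_nonneg
    exp_integral_nonneg[of T \<xi>] exp_integral_nonneg[of T "- \<zeta>"]
  by (simp_all add: gain_xx_def gain_xe_def gain_ex_def gain_ee_def add_nonneg_nonneg)

lemma gain_matrix_contraction:
  assumes gain: "exp_integral \<xi> T * (LGz ^ n * Lzstar * Lfz + Lfz * Lzstar * Lfstar / \<zeta>) < 1 - LGz ^ n"
  obtains w r where "w > 0" "0 < r" "r < 1" "gain_xx + w * gain_ex \<le> r" "gain_xe + w * gain_ee \<le> r * w"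
proof -
  define p c q where "p = exp_integral \<xi> T" and "c = exp_integral (- \<zeta>) T" and "q = LGz ^ n"
  define C1 C2 where "C1 = Lfz * Lzstar * Lfstar" and "C2 = q * Lzstar * Lfz"
  have p: "p \<ge> 0" and q: "q \<ge> 0" and C1: "C1 \<ge> 0" and C2: "C2 \<ge> 0"
    using T_pos LGz_nonneg Lfz_nonneg Lzstar_nonneg Lfstar_nonneg
    by (simp_all add: p_def q_def C1_def C2_def exp_integral_nonneg)
  have E: "exp (- \<zeta> * T) = 1 - \<zeta> * c" using exp_integral_eq[of "- \<zeta>" T] by (simp add: c_def)
  moreover have "exp (- \<zeta> * T) < 1" using zeta_pos T_pos by simp
  ultimately have c: "c > 0" using zeta_pos by (simp add: zero_less_mult_iff)
  have sum: "p * C2 + p * C1 / \<zeta> < 1 - q" using gain by (simp add: p_def q_def C1_def C2_def algebra_simps)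
  moreover have "0 \<le> p * C1 / \<zeta>" using p C1 zeta_pos by simp
  ultimately have pC2: "p * C2 < 1 - q" by linarith
  have "\<zeta> * (p * C2 + p * C1 / \<zeta>) < \<zeta> * (1 - q)" using sum zeta_pos by (rule mult_strict_left_mono)
  also have "\<zeta> * (p * C2 + p * C1 / \<zeta>) = p * (\<zeta> * C2) + p * C1" using zeta_pos by (simp add: field_simps)
  finally have small: "p * (\<zeta> * C2) + p * C1 < \<zeta> * (1 - q)" .
  moreover have "0 \<le> p * (\<zeta> * C2)" "0 \<le> \<zeta> * q" using p C2 q zeta_pos by simp_all
  ultimately have pC1: "p * C1 < \<zeta>" by (simp add: algebra_simps)
  have xx: "gain_xx = 1 - c * (\<zeta> - p * C1)" and ee: "gain_ee = q + p * C2"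
    unfolding gain_xx_def gain_ee_def E p_def c_def q_def C1_def C2_def by (simp_all add: algebra_simps)
  have "(1 - gain_xx) * (1 - gain_ee) - gain_xe * gain_ex = c * (\<zeta> * (1 - q) - (p * (\<zeta> * C2) + p * C1))"
    unfolding xx ee gain_xe_def gain_ex_def p_def c_def q_def C1_def C2_def by (simp add: algebra_simps)
  also have "\<dots> > 0" using c small by simp
  finally have "gain_xe * gain_ex < (1 - gain_xx) * (1 - gain_ee)" by simp
  moreover have "gain_xx < 1" "gain_ee < 1" using xx ee c pC1 pC2 by simp_all
  ultimately show ?thesis using weighted_l1_contraction_2x2 gain_nonneg that by blast
qed

lemma gain_condition_of_Tbound:
  assumes "0 < n" and T: "ereal T < Tbound \<xi> \<zeta> Lfx Lfz LGx LGz n"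
  shows "exp_integral \<xi> T * (LGz ^ n * Lzstar * Lfz + Lfz * Lzstar * Lfstar / \<zeta>) < 1 - LGz ^ n"
proof -
  define D where "D = LGz ^ n * Lzstar * Lfz + Lfz * Lzstar * Lfstar / \<zeta>"
  have "LGz ^ n < 1" using assms(1) LGz_nonneg LGz_less_1 by (simp add: power_less_one_iff)
  have "0 \<le> D" using LGz_nonneg Lzstar_nonneg Lfz_nonneg Lfstar_nonneg zeta_pos by (simp add: D_def)
  have D_eq: "LGz ^ n * LGx * Lfz / (1 - LGz) + Lfz * LGx / (1 - LGz) * (Lfx + Lfz * LGx / (1 - LGz)) / \<zeta> = D"
    by (simp add: D_def Lfstar_def Lzstar_def algebra_simps)
  have Tb: "ereal T < (if \<xi> = 0 then ereal ((1 - LGz ^ n) / D)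
      else if \<xi> * (1 - LGz ^ n) / D + 1 \<le> 0 then \<infinity> else ereal (ln (\<xi> * (1 - LGz ^ n) / D + 1) / \<xi>))"
    using T unfolding Tbound_def Let_def D_eq .
  \<comment> \<open>For \<open>D = 0\<close> the divisions by zero make the bound \<open>0\<close>, contradicting \<open>T > 0\<close>.\<close>
  have "D \<noteq> 0" using Tb T_pos by (auto split: if_splits)
  with \<open>0 \<le> D\<close> have "D > 0" by simp
  have "exp_integral \<xi> T < (1 - LGz ^ n) / D"
    using Tb \<open>LGz ^ n < 1\<close> \<open>D > 0\<close> by (intro exp_integral_less) (auto split: if_splits)
  then show ?thesis using \<open>D > 0\<close> by (simp add: D_def[symmetric] pos_less_divide_eq)
qed

end

locale sampled_solution = sampled_feedback Nx Nz WP X Z f G Lfx Lfz LGx LGz \<xi> \<zeta> T n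
  for Nx :: "'x::euclidean_space \<Rightarrow> real" and Nz :: "'z::real_normed_vector \<Rightarrow> real"
    and WP X Z f G Lfx Lfz LGx LGz \<xi> \<zeta> T n +
  fixes x :: "real \<Rightarrow> 'x" and z :: "real \<Rightarrow> 'z" and zk :: "nat \<Rightarrow> 'z"
  assumes x_cont: "continuous_on {0..} x"
    and x_deriv: "\<And>t. 0 \<le> t \<Longrightarrow> (x has_vector_derivative f (x t) (z t)) (at t within {t..})"
    and z_sampled: "\<And>t. 0 \<le> t \<Longrightarrow> z t = zk (nat \<lfloor>t / T\<rfloor>)"
    and zk_update: "\<And>k. zk (Suc k) = (G (x (real (Suc k) * T)) ^^ n) (zk k)"
    and x_in_X: "\<And>t. 0 \<le> t \<Longrightarrow> x t \<in> X" and z_in_Z: "\<And>t. 0 \<le> t \<Longrightarrow> z t \<in> Z"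
begin

definition sample_x :: "nat \<Rightarrow> real" where "sample_x k = Nx (x (real k * T))"

definition sample_err :: "nat \<Rightarrow> real" where "sample_err k = Nz (zk k - z_star (x (real k * T)))"

definition drift_bound :: "nat \<Rightarrow> real" where "drift_bound k = Lfz * sample_err k + Lfstar * sample_x k"

lemma sample_x_nonneg: "0 \<le> sample_x k"
  by (simp add: sample_x_def is_norm_nonneg[OF norm_x])

lemma sample_err_nonneg: "0 \<le> sample_err k"
  by (simp add: sample_err_def is_norm_nonneg[OF norm_z])

lemma drift_bound_nonneg: "0 \<le> drift_bound k"
  using Lfz_nonneg Lfstar_nonneg sample_x_nonneg sample_err_nonneg by (simp add: drift_bound_def)

lemma sample_time_nonneg: "0 \<le> real k * T"
  using T_pos by simp

lemma sample_time_Suc: "real (Suc k) * T = real k * T + T"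
  by (simp add: algebra_simps)

lemma z_eq_zk: "real k * T \<le> t \<Longrightarrow> t < real (Suc k) * T \<Longrightarrow> z t = zk k"
  using z_sampled[of t] nat_floor_divide_eq[OF T_pos] sample_time_nonneg[of k] by simp

lemma zk_in_Z: "zk k \<in> Z"
  using z_in_Z[OF sample_time_nonneg[of k]] z_eq_zk[of k "real k * T"] T_pos by simp

lemma x_tendsto_at_right: "0 \<le> t \<Longrightarrow> (x \<longlongrightarrow> x t) (at_right t)"
  using x_cont by (auto simp: continuous_on_def intro: tendsto_within_subset)

lemma x_has_vector_derivative_sampled:
  "real k * T \<le> t \<Longrightarrow> t < real (Suc k) * T \<Longrightarrow> (x has_vector_derivative f (x t) (zk k)) (at t within {t..})"
  using x_deriv[of t] z_eq_zk sample_time_nonneg[of k] by simp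

lemma f_sample_bound: "Nx (f (x (real k * T)) (zk k)) \<le> drift_bound k"
  using f_deviation_bound[OF x_in_X[OF sample_time_nonneg] zero_in_X zk_in_Z]
  by (simp add: f_zero z_star_zero drift_bound_def sample_err_def sample_x_def)

lemma sample_deviation:
  assumes t: "t \<in> {real k * T..real (Suc k) * T}"
  shows "Nx (x t - x (real k * T)) \<le> exp_integral \<xi> T * drift_bound k"
proof -
  define a where "a = real k * T"
  have "a \<ge> 0" by (simp add: a_def sample_time_nonneg)
  have "Nx (x t - x a) \<le> exp (\<xi> * (t - a)) * Nx (x a - x a) + drift_bound k * exp_integral \<xi> (t - a)"
  proof (rule dini_comparison[of a "real (Suc k) * T"])
    show "continuous_on {a..real (Suc k) * T} (\<lambda>t. Nx (x t - x a))"
      using \<open>a \<ge> 0\<close>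
      by (intro continuous_on_is_norm[OF norm_x] continuous_intros continuous_on_subset[OF x_cont]) auto
  next
    fix s e :: real assume s: "a \<le> s" "s < real (Suc k) * T" and "e > 0"
    show "eventually (\<lambda>y. Nx (x y - x a) \<le> Nx (x s - x a) + (y - s) * (\<xi> * Nx (x s - x a) + drift_bound k + e))
      (at_right s)"
    proof (rule right_dini_norm_bound[OF norm_x weak_pairing, where F = "\<lambda>y. f y (zk k)" and B = 0])
      show "(x has_vector_derivative f (x s) (zk k)) (at s within {s..})"
        using s by (intro x_has_vector_derivative_sampled) (simp_all add: a_def)
      show "(x \<longlongrightarrow> x s) (at_right s)" using s \<open>a \<ge> 0\<close> by (intro x_tendsto_at_right) simp
      show "WP (f (x y) (zk k) - f (x a) (zk k)) (x y - x a) \<le> \<xi> * (Nx (x y - x a))\<^sup>2"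
        if "s < y" "x y - x a \<noteq> 0" for y
        using that s \<open>a \<ge> 0\<close> by (intro f_oslip x_in_X zk_in_Z) auto
      show "Nx (f (x s) (zk k) - f (x y) (zk k)) \<le> 0 + Lfx * Nx (x s - x y)" if "s < y" for y
        using that s \<open>a \<ge> 0\<close> by (simp add: f_lip_x x_in_X zk_in_Z)
      show "0 + Nx (f (x a) (zk k)) \<le> drift_bound k" using f_sample_bound by (simp add: a_def)
    qed (rule \<open>e > 0\<close>)
  qed (use t in \<open>simp add: a_def\<close>)
  also have "\<dots> = drift_bound k * exp_integral \<xi> (t - a)" by (simp add: is_norm_zero[OF norm_x])
  also have "\<dots> \<le> drift_bound k * exp_integral \<xi> T"
    using t unfolding sample_time_Suc
    by (intro mult_left_mono exp_integral_mono drift_bound_nonneg) (auto simp: a_def)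
  finally show ?thesis by (simp add: a_def mult.commute)
qed

lemma estimate_error_bound:
  assumes t: "t \<in> {real k * T..real (Suc k) * T}"
  shows "Nz (zk k - z_star (x t)) \<le> sample_err k + Lzstar * (exp_integral \<xi> T * drift_bound k)"
proof -
  have xt: "x t \<in> X" and xa: "x (real k * T) \<in> X"
    using t sample_time_nonneg[of k] by (auto intro: x_in_X)
  have "Nz (zk k - z_star (x t))
      \<le> Nz (zk k - z_star (x (real k * T))) + Nz (z_star (x (real k * T)) - z_star (x t))"
    by (rule is_norm_triangle_sub[OF norm_z])
  also have "\<dots> \<le> sample_err k + Lzstar * Nx (x t - x (real k * T))"
    using z_star_lipschitz[OF xa xt] by (simp add: sample_err_def is_norm_minus_commute[OF norm_x])
  also have "\<dots> \<le> sample_err k + Lzstar * (exp_integral \<xi> T * drift_bound k)"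
    using sample_deviation[OF t] Lzstar_nonneg by (simp add: mult_left_mono)
  finally show ?thesis .
qed

lemma state_bound:
  assumes t: "t \<in> {real k * T..real (Suc k) * T}"
  shows "Nx (x t) \<le> exp (- \<zeta> * (t - real k * T)) * sample_x k
    + Lfz * (sample_err k + Lzstar * (exp_integral \<xi> T * drift_bound k)) * exp_integral (- \<zeta>) (t - real k * T)"
  unfolding sample_x_def
proof (rule dini_comparison[of "real k * T" "real (Suc k) * T"])
  show "continuous_on {real k * T..real (Suc k) * T} (\<lambda>t. Nx (x t))"
    using sample_time_nonneg[of k]
    by (intro continuous_on_is_norm[OF norm_x] continuous_on_subset[OF x_cont]) auto
next
  fix s e :: real assume s: "real k * T \<le> s" "s < real (Suc k) * T" and "e > 0"
  have "s \<ge> 0" using s(1) sample_time_nonneg[of k] by linarith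
  have "eventually (\<lambda>y. Nx (x y - 0) \<le> Nx (x s - 0) + (y - s) * (- \<zeta> * Nx (x s - 0)
      + Lfz * (sample_err k + Lzstar * (exp_integral \<xi> T * drift_bound k)) + e)) (at_right s)"
  proof (rule right_dini_norm_bound[OF norm_x weak_pairing, where F = "\<lambda>y. f y (z_star y)"])
    show "(x has_vector_derivative f (x s) (zk k)) (at s within {s..})"
      using s by (rule x_has_vector_derivative_sampled)
    show "(x \<longlongrightarrow> x s) (at_right s)" using \<open>s \<ge> 0\<close> by (rule x_tendsto_at_right)
    show "WP (f (x y) (z_star (x y)) - f 0 (z_star 0)) (x y - 0) \<le> - \<zeta> * (Nx (x y - 0))\<^sup>2"
      if "s < y" "x y - 0 \<noteq> 0" for y
      using that \<open>s \<ge> 0\<close> by (intro f_zstar_oslip x_in_X zero_in_X) auto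
    show "Nx (f (x s) (zk k) - f (x y) (z_star (x y)))
        \<le> Lfz * Nz (zk k - z_star (x s)) + Lfstar * Nx (x s - x y)" if "s < y" for y
      using that \<open>s \<ge> 0\<close> by (intro f_deviation_bound x_in_X zk_in_Z) auto
    have "Nz (zk k - z_star (x s)) \<le> sample_err k + Lzstar * (exp_integral \<xi> T * drift_bound k)"
      using s by (intro estimate_error_bound) simp
    then show "Lfz * Nz (zk k - z_star (x s)) + Nx (f 0 (z_star 0))
        \<le> Lfz * (sample_err k + Lzstar * (exp_integral \<xi> T * drift_bound k))"
      using Lfz_nonneg by (simp add: z_star_zero f_zero is_norm_zero[OF norm_x] mult_left_mono)
  qed (rule \<open>e > 0\<close>)
  then show "eventually (\<lambda>y. Nx (x y) \<le> Nx (x s) + (y - s) * (- \<zeta> * Nx (x s)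
      + Lfz * (sample_err k + Lzstar * (exp_integral \<xi> T * drift_bound k)) + e)) (at_right s)"
    by simp
qed (use t in simp)

lemma sample_x_Suc: "sample_x (Suc k) \<le> gain_xx * sample_x k + gain_xe * sample_err k"
proof -
  have "sample_x (Suc k) \<le> exp (- \<zeta> * T) * sample_x k
      + Lfz * (sample_err k + Lzstar * (exp_integral \<xi> T * drift_bound k)) * exp_integral (- \<zeta>) T"
    using state_bound[of "real (Suc k) * T" k] T_pos by (simp add: sample_x_def algebra_simps)
  also have "\<dots> = gain_xx * sample_x k + gain_xe * sample_err k"
    by (simp add: gain_xx_def gain_xe_def drift_bound_def algebra_simps)
  finally show ?thesis .
qed

lemma sample_err_Suc: "sample_err (Suc k) \<le> gain_ex * sample_x k + gain_ee * sample_err k"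
proof -
  define b where "b = real (Suc k) * T"
  have xb: "x b \<in> X" unfolding b_def by (rule x_in_X[OF sample_time_nonneg])
  have "sample_err (Suc k) = Nz ((G (x b) ^^ n) (zk k) - (G (x b) ^^ n) (z_star (x b)))"
    using xb by (simp add: sample_err_def zk_update funpow_G_z_star b_def)
  also have "\<dots> \<le> LGz ^ n * Nz (zk k - z_star (x b))"
    using xb by (intro funpow_G_contraction zk_in_Z z_star_in_Z)
  also have "\<dots> \<le> LGz ^ n * (sample_err k + Lzstar * (exp_integral \<xi> T * drift_bound k))"
    using LGz_nonneg T_pos by (intro mult_left_mono estimate_error_bound) (simp_all add: b_def)
  also have "\<dots> = gain_ex * sample_x k + gain_ee * sample_err k"
    by (simp add: gain_ex_def gain_ee_def drift_bound_def algebra_simps)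
  finally show ?thesis .
qed

lemma intersample_bound:
  assumes t: "real k * T \<le> t" "t < real (Suc k) * T"
  shows "Nx (x t) + Nz (z t) \<le> (1 + Lzstar + gain_xx) * sample_x k + (1 + gain_xe) * sample_err k"
proof -
  define C where "C = Lfz * (sample_err k + Lzstar * (exp_integral \<xi> T * drift_bound k))"
  have C: "0 \<le> C"
    using Lfz_nonneg Lzstar_nonneg sample_err_nonneg drift_bound_nonneg T_pos
    by (simp add: C_def exp_integral_nonneg)
  have "Nx (x t) \<le> exp (- \<zeta> * (t - real k * T)) * sample_x k + C * exp_integral (- \<zeta>) (t - real k * T)"
    using state_bound[of t k] t by (simp add: C_def)
  also have "\<dots> \<le> 1 * sample_x k + C * exp_integral (- \<zeta>) T"
    using t zeta_pos sample_x_nonneg C unfolding sample_time_Suc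
    by (intro add_mono mult_right_mono mult_left_mono exp_integral_mono) auto
  also have "C * exp_integral (- \<zeta>) T = (gain_xx - exp (- \<zeta> * T)) * sample_x k + gain_xe * sample_err k"
    by (simp add: C_def gain_xx_def gain_xe_def drift_bound_def algebra_simps)
  moreover have "0 \<le> exp (- \<zeta> * T) * sample_x k" using sample_x_nonneg[of k] by simp
  ultimately have "Nx (x t) \<le> (1 + gain_xx) * sample_x k + gain_xe * sample_err k"
    by (simp add: algebra_simps)
  moreover have "Nz (z t) \<le> sample_err k + Lzstar * sample_x k"
  proof -
    have "Nz (z t) \<le> Nz (zk k - z_star (x (real k * T))) + Nz (z_star (x (real k * T)))"
      using z_eq_zk[OF t] is_norm_triangle_sub[OF norm_z, of "zk k" 0 "z_star (x (real k * T))"] by simp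
    then show ?thesis
      using norm_z_star_le[OF x_in_X[OF sample_time_nonneg[of k]]]
      unfolding sample_err_def sample_x_def by linarith
  qed
  ultimately show ?thesis by (simp add: algebra_simps)
qed

lemma initial_error_bound: "sample_err 0 \<le> Nz (z 0) + Lzstar * Nx (x 0)"
  using is_norm_diff_le_add[OF norm_z, of "z 0" "z_star (x 0)"] norm_z_star_le[OF x_in_X, of 0]
    z_eq_zk[of 0 0] T_pos
  by (simp add: sample_err_def)

lemma sampled_decay_bound:
  assumes w: "w > 0" and r: "0 < r" "r < 1"
    and contraction: "gain_xx + w * gain_ex \<le> r" "gain_xe + w * gain_ee \<le> r * w" and t: "0 \<le> t"
  shows "Nx (x t) + Nz (z t) \<le> max (1 + Lzstar + gain_xx) ((1 + gain_xe) / w) * max (1 + w * Lzstar) w / r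
    * exp (- (- ln r / T) * t) * (Nx (x 0) + Nz (z 0))"
proof -
  define Kc Kv where "Kc = max (1 + Lzstar + gain_xx) ((1 + gain_xe) / w)" and "Kv = max (1 + w * Lzstar) w"
  obtain k where k: "real k * T \<le> t" "t < real (Suc k) * T" using sampling_interval_exists[OF T_pos t] .
  have "Kc \<ge> 0" using Lzstar_nonneg gain_nonneg by (simp add: Kc_def le_max_iff_disj)
  have "(1 + gain_xe) / w \<le> Kc" by (simp add: Kc_def)
  then have "1 + gain_xe \<le> Kc * w" using w by (simp add: divide_le_eq)
  have "Nx (x t) + Nz (z t) \<le> (1 + Lzstar + gain_xx) * sample_x k + (1 + gain_xe) * sample_err k"
    by (rule intersample_bound[OF k])
  also have "\<dots> \<le> Kc * sample_x k + (Kc * w) * sample_err k"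
    using \<open>1 + gain_xe \<le> Kc * w\<close>
    by (intro add_mono mult_right_mono sample_x_nonneg sample_err_nonneg) (simp_all add: Kc_def)
  also have "\<dots> = Kc * (sample_x k + w * sample_err k)" by (simp add: algebra_simps)
  also have "\<dots> \<le> Kc * (r ^ k * (sample_x 0 + w * sample_err 0))"
    using weighted_l1_geometric_decay[where X = sample_x and e = sample_err,
        OF sample_x_nonneg sample_err_nonneg w _ sample_x_Suc sample_err_Suc contraction] r \<open>Kc \<ge> 0\<close>
    by (simp add: mult_left_mono)
  also have "\<dots> \<le> Kc * (exp (- (- ln r / T) * t) / r * (Kv * (Nx (x 0) + Nz (z 0))))"
  proof (intro mult_left_mono mult_mono \<open>Kc \<ge> 0\<close>)
    show "r ^ k \<le> exp (- (- ln r / T) * t) / r" using power_le_exp_sampling[OF r T_pos k] .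
    have "sample_x 0 + w * sample_err 0 \<le> (1 + w * Lzstar) * Nx (x 0) + w * Nz (z 0)"
      using mult_left_mono[OF initial_error_bound, of w] w by (simp add: sample_x_def algebra_simps)
    also have "\<dots> \<le> Kv * Nx (x 0) + Kv * Nz (z 0)"
      by (intro add_mono mult_right_mono) (simp_all add: Kv_def is_norm_nonneg[OF norm_x] is_norm_nonneg[OF norm_z])
    finally show "sample_x 0 + w * sample_err 0 \<le> Kv * (Nx (x 0) + Nz (z 0))" by (simp add: algebra_simps)
  qed (use r sample_x_nonneg sample_err_nonneg w in \<open>simp_all add: add_nonneg_nonneg\<close>)
  finally show ?thesis by (simp add: Kc_def Kv_def field_simps)
qed

end

lemma (in sampled_feedback) exponential_decay:
  assumes gain: "exp_integral \<xi> T * (LGz ^ n * Lzstar * Lfz + Lfz * Lzstar * Lfstar / \<zeta>) < 1 - LGz ^ n"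
  obtains K \<alpha> where "K > 0" "\<alpha> > 0"
    "\<And>x z t. is_solution f G n T x z \<Longrightarrow> (\<And>t. 0 \<le> t \<Longrightarrow> x t \<in> X \<and> z t \<in> Z) \<Longrightarrow> 0 \<le> t \<Longrightarrow>
      Nx (x t) + Nz (z t) \<le> K * exp (- \<alpha> * t) * (Nx (x 0) + Nz (z 0))"
proof -
  obtain w r where wr: "w > 0" "0 < r" "r < 1" "gain_xx + w * gain_ex \<le> r" "gain_xe + w * gain_ee \<le> r * w"
    using gain_matrix_contraction[OF gain] .
  define K where "K = max (1 + Lzstar + gain_xx) ((1 + gain_xe) / w) * max (1 + w * Lzstar) w / r"
  have "0 < max (1 + Lzstar + gain_xx) ((1 + gain_xe) / w)" "0 < max (1 + w * Lzstar) w"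
    using wr(1) Lzstar_nonneg gain_nonneg by (simp_all add: less_max_iff_disj)
  then have "K > 0" using wr(2) by (simp add: K_def)
  moreover have "ln r < 0" using wr(2,3) by simp
  then have "- ln r / T > 0" using T_pos by (simp add: divide_neg_pos)
  moreover have "Nx (x t) + Nz (z t) \<le> K * exp (- (- ln r / T) * t) * (Nx (x 0) + Nz (z 0))"
    if sol: "is_solution f G n T x z" and inv: "\<And>t. 0 \<le> t \<Longrightarrow> x t \<in> X \<and> z t \<in> Z" and "0 \<le> t"
    for x z t
  proof -
    obtain zk where "\<forall>t\<ge>0. z t = zk (nat \<lfloor>t / T\<rfloor>)" "\<forall>k. zk (Suc k) = (G (x (real (Suc k) * T)) ^^ n) (zk k)"
      using sol unfolding is_solution_def by blast
    then interpret sampled_solution Nx Nz WP X Z f G Lfx Lfz LGx LGz \<xi> \<zeta> T n x z zk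
      using sol inv by unfold_locales (auto simp: is_solution_def)
    show ?thesis using sampled_decay_bound[OF wr \<open>0 \<le> t\<close>] by (simp add: K_def)
  qed
  ultimately show ?thesis using that by blast
qed

lemma sampled_feedback_Lip:
  fixes Nx :: "'x::euclidean_space \<Rightarrow> real" and Nz :: "'z::real_normed_vector \<Rightarrow> real"
  assumes normX: "is_norm Nx" and normZ: "is_norm Nz" and WP: "compatible_weak_pairing Nx WP"
    and zero_in: "0 \<in> X" "0 \<in> Z" and G_maps: "\<forall>x\<in>X. \<forall>z\<in>Z. G x z \<in> Z"
    and fixpt: "\<forall>x\<in>X. \<exists>!z. z \<in> Z \<and> G x z = z" and f0: "f 0 0 = 0" and G0: "G 0 0 = 0"
    and Lf: "Lip_x Nx Nx X Z f < \<infinity>" "Lip_z Nz Nx X Z f < \<infinity>"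
    and LG: "Lip_x Nx Nz X Z G < \<infinity>" "Lip_z Nz Nz X Z G < 1"
    and xi: "osLip_x WP Nx X Z f \<le> ereal \<xi>"
    and zeta: "osLip WP Nx X (\<lambda>x. f x (zstar G Z x)) \<le> ereal (- \<zeta>)" "0 < \<zeta>" and T: "0 < T"
  shows "sampled_feedback Nx Nz WP X Z f G (real_of_ereal (Lip_x Nx Nx X Z f))
    (real_of_ereal (Lip_z Nz Nx X Z f)) (real_of_ereal (Lip_x Nx Nz X Z G))
    (real_of_ereal (Lip_z Nz Nz X Z G)) \<xi> \<zeta> T"
proof -
  have LGz: "Lip_z Nz Nz X Z G < \<infinity>" "real_of_ereal (Lip_z Nz Nz X Z G) < 1"
    using LG(2) by (cases "Lip_z Nz Nz X Z G"; simp)+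
  show ?thesis
  proof (unfold_locales; (rule normX normZ WP zero_in f0 G0 zeta(2) T
        Lip_x_nonneg[OF normX normX] Lip_z_nonneg[OF normZ normX] Lip_x_nonneg[OF normX normZ]
        Lip_z_nonneg[OF normZ normZ] Lip_x_le[OF normX normX Lf(1)] Lip_z_le[OF normZ normX Lf(2)]
        Lip_x_le[OF normX normZ LG(1)] Lip_z_le[OF normZ normZ LGz(1)] LGz(2) osLip_x_le[OF normX xi]
        osLip_le[OF normX zeta(1)])?)
    show "G x z \<in> Z" if "x \<in> X" "z \<in> Z" for x z using G_maps that by blast
    show "\<exists>!z. z \<in> Z \<and> G x z = z" if "x \<in> X" for x using fixpt that by blast
  qed
qed

theorem corollary1:
  fixes Nx :: "real^'nx \<Rightarrow> real" and Nz :: "real^'nz \<Rightarrow> real"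
    and WP :: "real^'nx \<Rightarrow> real^'nx \<Rightarrow> real"
    and X :: "(real^'nx) set" and Z :: "(real^'nz) set"
    and f :: "real^'nx \<Rightarrow> real^'nz \<Rightarrow> real^'nx"
    and G :: "real^'nx \<Rightarrow> real^'nz \<Rightarrow> real^'nz"
    and \<xi> \<zeta> T :: real and n :: nat
  assumes normX: "is_norm Nx" and normZ: "is_norm Nz"
    and WP: "compatible_weak_pairing Nx WP"
    and convX: "convex X" and convZ: "convex Z"
    and zero_in: "0 \<in> X" "0 \<in> Z"
    and f_cont: "continuous_on (X \<times> Z) (\<lambda>(x, z). f x z)"
    and G_cont: "continuous_on (X \<times> Z) (\<lambda>(x, z). G x z)"
    and G_maps: "\<forall>x\<in>X. \<forall>z\<in>Z. G x z \<in> Z"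
    and f0: "f 0 0 = 0" and G0: "G 0 0 = 0"
    and fixpt: "\<forall>x\<in>X. \<exists>!z. z \<in> Z \<and> G x z = z"
    and A1: "Lip_x Nx Nx X Z f < \<infinity>"
    and A2: "0 < Lip_z Nz Nx X Z f" "Lip_z Nz Nx X Z f < \<infinity>"
            "0 < Lip_x Nx Nz X Z G" "Lip_x Nx Nz X Z G < \<infinity>"
    and A3: "Lip_z Nz Nz X Z G < 1"
    and xi: "osLip_x WP Nx X Z f \<le> ereal \<xi>"
    and zeta: "\<zeta> > 0" "osLip WP Nx X (\<lambda>x. f x (zstar G Z x)) \<le> ereal (- \<zeta>)"
    and n: "n > 0"
    and T: "0 < T"
           "ereal T < Tbound \<xi> \<zeta> (real_of_ereal (Lip_x Nx Nx X Z f)) (real_of_ereal (Lip_z Nz Nx X Z f))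
                       (real_of_ereal (Lip_x Nx Nz X Z G)) (real_of_ereal (Lip_z Nz Nz X Z G)) n"
  shows "\<exists>\<eta>1 \<eta>2 \<rho> \<alpha>. \<eta>1 > 0 \<and> \<eta>2 > 0 \<and> \<rho> > 0 \<and> \<alpha> > 0 \<and>
    (\<forall>X0 Z0. X0 \<subseteq> X \<and> Z0 \<subseteq> Z \<and>
       (\<forall>x z. is_solution f G n T x z \<and> x 0 \<in> X0 \<and> z 0 \<in> Z0
              \<longrightarrow> (\<forall>t\<ge>0. x t \<in> X \<and> z t \<in> Z))
     \<longrightarrow> (\<forall>x z. is_solution f G n T x z \<and> x 0 \<in> X0 \<and> z 0 \<in> Z0
              \<longrightarrow> (\<forall>t\<ge>0. sqrt (\<eta>1 * (Nx (x t))\<^sup>2 + \<eta>2 * (Nz (z t))\<^sup>2)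
                      \<le> \<rho> * exp (- \<alpha> * t) * sqrt (\<eta>1 * (Nx (x 0))\<^sup>2 + \<eta>2 * (Nz (z 0))\<^sup>2))))"
proof -
  interpret sampled_feedback Nx Nz WP X Z f G "real_of_ereal (Lip_x Nx Nx X Z f)"
    "real_of_ereal (Lip_z Nz Nx X Z f)" "real_of_ereal (Lip_x Nx Nz X Z G)"
    "real_of_ereal (Lip_z Nz Nz X Z G)" \<xi> \<zeta> T n
    by (rule sampled_feedback_Lip[OF normX normZ WP zero_in G_maps fixpt f0 G0 A1 A2(2,4) A3 xi
          zeta(2,1) T(1)])
  obtain K \<alpha> where K: "K > 0" "\<alpha> > 0" and decay: "\<And>x z t. is_solution f G n T x z \<Longrightarrow>
      (\<And>t. 0 \<le> t \<Longrightarrow> x t \<in> X \<and> z t \<in> Z) \<Longrightarrow> 0 \<le> t \<Longrightarrow>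
      Nx (x t) + Nz (z t) \<le> K * exp (- \<alpha> * t) * (Nx (x 0) + Nz (z 0))"
    using exponential_decay[OF gain_condition_of_Tbound[OF n T(2)]] by blast
  have "sqrt (1 * (Nx (x t))\<^sup>2 + 1 * (Nz (z t))\<^sup>2)
      \<le> K * sqrt 2 * exp (- \<alpha> * t) * sqrt (1 * (Nx (x 0))\<^sup>2 + 1 * (Nz (z 0))\<^sup>2)"
    if "is_solution f G n T x z" "\<forall>t\<ge>0. x t \<in> X \<and> z t \<in> Z" "0 \<le> t" for x z t
    using sqrt_sum_squares_le_of_sum_le[OF is_norm_nonneg[OF normX] is_norm_nonneg[OF normZ] _
        decay[OF that(1) _ that(3)]] that(2) K by (simp add: ac_simps)
  then show ?thesis using K by (intro exI[of _ 1] exI[of _ "K * sqrt 2"] exI[of _ \<alpha>]) auto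
qed

end
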